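(* Let $p$ be a prime, $m\mid n$, $s=p^m-1$, $t=(p^n-1)/(p^m-1)$, and assume $\gcd(s,t)=1$. Let $\alpha$ be a generator of $\mathbb{F}_{p^n}^\times$, $\beta=\alpha^t\in\mathbb{F}_{p^m}^\times$, $\gamma=\alpha^s$, and let $B_{i,j}=\mathrm{tr}_{\mathbb{F}_{p^n}/\mathbb{F}_p}(\beta^i\gamma^j)$ for $(i,j)\in\mathbb{Z}_s\times\mathbb{Z}_t$. For each $j$, consider the column $(B_{i,j})_{0\le i<s}$. Then: (1) if $\mathrm{tr}_{\mathbb{F}_{p^n}/\mathbb{F}_{p^m}}(\gamma^j)=0$, the column is identically zero; (2) if $\mathrm{tr}_{\mathbb{F}_{p^n}/\mathbb{F}_{p^m}}(\gamma^j)=\beta^r\in\mathbb{F}_{p^m}^\times$, then the column equals $\mathsf{DB}_\beta^{[r]}$, i.e. $B_{i,j}=\mathrm{tr}_{\mathbb{F}_{p^m}/\mathbb{F}_p}(\beta^{r+i})$ for all $0\le i<s$.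
   Context: $\mathrm{tr}_{K/F}$ denotes the field trace. $\mathsf{DB}_\beta=(\mathrm{tr}_{\mathbb{F}_{p^m}/\mathbb{F}_p}(\beta^i))_{0\le i<s}$ and for an integer $r$, $\mathsf{DB}_\beta^{[r]}$ is its cyclic shift $(\mathrm{tr}_{\mathbb{F}_{p^m}/\mathbb{F}_p}(\beta^{r+i}))_{0\le i<s}$, indices mod $s$. *)

theory Defs
  imports "HOL-Computational_Algebra.Primes"
begin

text \<open>Trace from the finite field of q^d elements (a degree-d extension of the
subfield with q elements) down to that subfield, in Frobenius form:
x + x^q + ... + x^(q^(d-1)).\<close>
definition ff_trace :: "nat \<Rightarrow> nat \<Rightarrow> 'a::field \<Rightarrow> 'a" where
  "ff_trace q d x = (\<Sum>k<d. x ^ (q ^ k))"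

end

(*
  Write n = m d. The trace is transitive, tr_{p^n/p} = tr_{p^m/p} o tr_{p^n/p^m}: split each
  Frobenius exponent p^k, k < m d, as p^(a + m b) and use that x -> x^(p^a) is additive.
  The element beta = alpha^t is the norm of alpha, so beta^s = 1 and beta lies in F_(p^m),
  where the inner trace is linear. Hence B_(i,j) = tr_{p^m/p}(beta^i tr_{p^n/p^m}(gamma^j)),
  and both cases follow after reducing exponents of beta modulo s.
*)
theory Submission
  imports Defs "HOL-Algebra.Multiplicative_Group"
begin

lemma diff_one_dvd_power_diff_one: "(q::nat) - 1 dvd q ^ d - 1"
proof (cases "q = 0")
  case True
  then show ?thesis by (simp add: power_0_left)
next
  case False
  then have "int (q ^ d - 1) = int (q - 1) * (\<Sum>i<d. int q ^ i)"
    using power_diff_1_eq[of "int q" d] by (simp add: of_nat_diff)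
  then show ?thesis
    by (metis dvd_triv_left int_dvd_int_iff dvd_mult)
qed

lemma power_mod_of_power_eq_1:
  fixes x :: "'a::monoid_mult"
  assumes "x ^ n = 1"
  shows "x ^ (k mod n) = x ^ k"
proof -
  have "x ^ k = x ^ (n * (k div n) + k mod n)" by simp
  also have "\<dots> = x ^ (k mod n)" by (simp only: power_add power_mult assms power_one mult_1_left)
  finally show ?thesis by (rule sym)
qed

lemma sum_lessThan_mult:
  fixes g :: "nat \<Rightarrow> 'b::comm_monoid_add"
  shows "(\<Sum>k<m * d. g k) = (\<Sum>a<m. \<Sum>b<d. g (a + m * b))"
proof -
  have "(\<Sum>k<m * d. g k) = (\<Sum>b<d. \<Sum>a<m. g (m * b + a))"
    using sum.nat_group[of g m d, symmetric]
    by (simp add: sum.atLeastLessThan_shift_0 atLeast0LessThan mult.commute)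
  then show ?thesis
    by (simp add: sum.swap[of _ "{..<d}"] add.commute)
qed

lemma field_power_card_minus_one:
  fixes x :: "'a::{finite,field}"
  assumes "x \<noteq> 0"
  shows "x ^ (card (UNIV :: 'a set) - 1) = 1"
proof -
  let ?G = "\<lparr>carrier = UNIV - {0}, mult = (*), one = 1\<rparr> :: 'a monoid"
  have "group ?G"
    by (rule groupI) (auto simp: Bex_def intro!: exI[of _ "inverse _"])
  then have "x [^]\<^bsub>?G\<^esub> order ?G = \<one>\<^bsub>?G\<^esub>"
    by (rule group.pow_order_eq_1) (simp add: assms)
  moreover have "x [^]\<^bsub>?G\<^esub> k = x ^ k" for k :: nat
    by (induction k) simp_all
  ultimately show ?thesis
    by (simp add: order_def card_Diff_singleton)
qed

lemma norm_exponent_power_pred_eq_1: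
  fixes x :: "'a::{finite,field}"
  assumes "card (UNIV :: 'a set) = q ^ d" and "x \<noteq> 0"
  shows "(x ^ ((q ^ d - 1) div (q - 1))) ^ (q - 1) = 1"
proof -
  have "(q ^ d - 1) div (q - 1) * (q - 1) = card (UNIV :: 'a set) - 1"
    using diff_one_dvd_power_diff_one[of q d] assms(1) by simp
  then show ?thesis
    using field_power_card_minus_one[OF assms(2)] by (simp flip: power_mult)
qed

lemma ff_trace_0: "0 < q \<Longrightarrow> ff_trace q d 0 = 0"
  by (simp add: ff_trace_def zero_power)

lemma ff_trace_mult_fixed:
  fixes c x :: "'a::field"
  assumes "c ^ q = c"
  shows "ff_trace q d (c * x) = c * ff_trace q d x"
proof -
  have "c ^ (q ^ k) = c" for k
    by (induction k) (simp_all add: power_mult assms)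
  then show ?thesis
    by (simp add: ff_trace_def power_mult_distrib sum_distrib_left)
qed

lemma ff_trace_trans:
  fixes x :: "'a::field"
  assumes "prime CHAR('a)"
  shows "ff_trace CHAR('a) (m * d) x = ff_trace CHAR('a) m (ff_trace (CHAR('a) ^ m) d x)"
proof -
  let ?p = "CHAR('a)"
  have "ff_trace ?p (m * d) x = (\<Sum>a<m. \<Sum>b<d. x ^ (?p ^ (a + m * b)))"
    unfolding ff_trace_def by (rule sum_lessThan_mult)
  also have "\<dots> = (\<Sum>a<m. (\<Sum>b<d. x ^ ((?p ^ m) ^ b)) ^ (?p ^ a))"
    by (simp add: freshmans_dream_sum'[OF assms] power_add mult.commute flip: power_mult)
  finally show ?thesis
    by (simp add: ff_trace_def)
qed

theorem mainTheorem5: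
  fixes \<alpha> :: "'a::{finite,field}" and p m n :: nat
  assumes "prime p"
    and "CHAR('a) = p"
    and "card (UNIV :: 'a set) = p ^ n"
    and "m dvd n"
    and "gcd (p ^ m - 1) ((p ^ n - 1) div (p ^ m - 1)) = 1"
    and "\<alpha> \<noteq> 0"
    and "\<forall>x::'a. x \<noteq> 0 \<longrightarrow> (\<exists>k::nat. x = \<alpha> ^ k)"
  shows "let s = p ^ m - 1; t = (p ^ n - 1) div (p ^ m - 1);
             \<beta> = \<alpha> ^ t; \<gamma> = \<alpha> ^ s
         in \<forall>j<t.
              (ff_trace (p ^ m) (n div m) (\<gamma> ^ j) = 0 \<longrightarrow>
                 (\<forall>i<s. ff_trace p n (\<beta> ^ i * \<gamma> ^ j) = 0))
            \<and> (\<forall>r::nat. ff_trace (p ^ m) (n div m) (\<gamma> ^ j) = \<beta> ^ r \<longrightarrow>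
                 (\<forall>i<s. ff_trace p n (\<beta> ^ i * \<gamma> ^ j) = ff_trace p m (\<beta> ^ ((r + i) mod s))))"
proof -
  define s t d where "s = p ^ m - 1" and "t = (p ^ n - 1) div (p ^ m - 1)" and "d = n div m"
  define \<beta> where "\<beta> = \<alpha> ^ t"
  have "p > 0" and "prime CHAR('a)"
    using assms(1,2) prime_gt_0_nat by simp_all
  have n: "n = m * d"
    using assms(4) by (simp add: d_def)
  have \<beta>_order: "\<beta> ^ s = 1"
    using norm_exponent_power_pred_eq_1[of "p ^ m" d \<alpha>] assms(3,6)
    by (simp add: \<beta>_def s_def t_def n power_mult)
  have "(\<beta> ^ i) ^ (p ^ m) = \<beta> ^ i" for i
  proof -
    have "p ^ m = Suc s"
      using \<open>p > 0\<close> by (simp add: s_def)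
    then have "\<beta> ^ (p ^ m) = \<beta>"
      by (simp add: \<beta>_order)
    then show ?thesis
      by (metis power_mult mult.commute)
  qed
  then have column: "ff_trace p n (\<beta> ^ i * y) = ff_trace p m (\<beta> ^ i * ff_trace (p ^ m) d y)" for i y
    using ff_trace_trans[OF \<open>prime CHAR('a)\<close>, of m d] by (simp add: assms(2) n ff_trace_mult_fixed)
  have "\<forall>j<t.
          (ff_trace (p ^ m) d (\<gamma> ^ j) = 0 \<longrightarrow>
             (\<forall>i<s. ff_trace p n (\<beta> ^ i * \<gamma> ^ j) = 0))
        \<and> (\<forall>r::nat. ff_trace (p ^ m) d (\<gamma> ^ j) = \<beta> ^ r \<longrightarrow>
             (\<forall>i<s. ff_trace p n (\<beta> ^ i * \<gamma> ^ j) = ff_trace p m (\<beta> ^ ((r + i) mod s))))"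
    for \<gamma> :: 'a
    using \<open>p > 0\<close>
    by (simp add: column ff_trace_0 power_mod_of_power_eq_1[OF \<beta>_order] flip: power_add add.commute)
  then show ?thesis
    by (simp only: Let_def s_def t_def d_def \<beta>_def)
qed

end
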